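(* Let $F_c(t)=\log\big(1+2c\sinh\frac{t}{2}\big)$. For $t\ge 0$ the following hold: (1) if $c\ge 1$, then $\frac{t}{t+1}\log c+\frac{t}{2}\le F_c(t)$; (2) if $c>0$, then $F_c(t)\le \log\Big(c+\frac{1}{4c}\Big)+\frac{t}{2}$. Equality holds in (1) if and only if $t=0$, and equality holds in (2) if and only if $c\ge\frac12$ and $t=2\log(2c)$. *)

theory Defs
  imports Complex_Main
begin

definition F :: "real \<Rightarrow> real \<Rightarrow> real" where
  "F c t = ln (1 + 2 * c * sinh (t / 2))"

end

theory Submission
  imports Defs "HOL-Analysis.Analysis"
begin

text \<open>
  Substituting \<open>x = exp (t/2) \<ge> 1\<close> gives \<open>F c t = ln (1 + c (x - 1/x))\<close> and \<open>t/2 = ln x\<close>,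
  so both bounds reduce to comparisons of \<open>1 + c (x - 1/x)\<close> with a multiple of \<open>x\<close>.
  The upper bound is the identity \<open>(c + 1/(4c)) x - (1 + c (x - 1/x)) = (x - 2c)\<^sup>2 / (4cx)\<close>.
  For the lower bound put \<open>s = t/(t+1)\<close>: concavity of \<open>ln\<close> gives \<open>s ln c \<le> ln (1 + s (c - 1))\<close>,
  and \<open>(1 + s (c - 1)) x \<le> 1 + c (x - 1/x)\<close> follows from \<open>(1 - s) x\<^sup>2 = exp t / (t + 1) \<ge> 1\<close>,
  strictly as soon as \<open>x > 1\<close>.
\<close>

lemma F_exp_form: "F c t = ln (1 + c * (exp (t/2) - 1 / exp (t/2)))"
  unfolding F_def sinh_def by (simp add: exp_minus inverse_eq_divide)

lemma mult_ln_le_ln_affine: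
  fixes c s :: real
  assumes "c > 0" "0 \<le> s" "s \<le> 1"
  shows "s * ln c \<le> ln (1 + s * (c - 1))"
proof -
  have "(1 - s) * ln 1 + s * ln c \<le> ln ((1 - s) *\<^sub>R 1 + s *\<^sub>R c)"
    using assms by (intro concave_onD[OF ln_concave]) auto
  then show ?thesis by (simp add: algebra_simps)
qed

lemma affine_mult_le_sinh_form:
  fixes c s x :: real
  assumes c: "c \<ge> 1" and x: "x \<ge> 1" and sx: "(1 - s) * x\<^sup>2 \<ge> 1"
  shows "(1 + s * (c - 1)) * x \<le> 1 + c * (x - 1/x)"
    and "x > 1 \<Longrightarrow> (1 + s * (c - 1)) * x < 1 + c * (x - 1/x)"
proof -
  have diff: "1 + c * (x - 1/x) - (1 + s * (c - 1)) * x
      = (1 - 1/x) + (c - 1) * ((1 - s) * x\<^sup>2 - 1) / x"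
    using x by (simp add: field_simps power2_eq_square)
  have "(c - 1) * ((1 - s) * x\<^sup>2 - 1) / x \<ge> 0"
    using c x sx by simp
  moreover have "1 - 1/x \<ge> 0" using x by simp
  ultimately show "(1 + s * (c - 1)) * x \<le> 1 + c * (x - 1/x)"
    using diff by linarith
  assume "x > 1"
  then have "1 - 1/x > 0" by simp
  with \<open>(c - 1) * ((1 - s) * x\<^sup>2 - 1) / x \<ge> 0\<close> show "(1 + s * (c - 1)) * x < 1 + c * (x - 1/x)"
    using diff by linarith
qed

lemma sinh_form_le_mult:
  fixes c x :: real
  assumes "c > 0" "x > 0"
  shows "1 + c * (x - 1/x) \<le> (c + 1 / (4 * c)) * x"
    and "1 + c * (x - 1/x) = (c + 1 / (4 * c)) * x \<longleftrightarrow> x = 2 * c"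
proof -
  have diff: "(c + 1 / (4 * c)) * x - (1 + c * (x - 1/x)) = (x - 2 * c)\<^sup>2 / (4 * c * x)"
    using assms by (simp add: field_simps power2_eq_square)
  have "(x - 2 * c)\<^sup>2 / (4 * c * x) \<ge> 0"
    using assms by simp
  then show "1 + c * (x - 1/x) \<le> (c + 1 / (4 * c)) * x"
    using diff by linarith
  have "(x - 2 * c)\<^sup>2 / (4 * c * x) = 0 \<longleftrightarrow> x = 2 * c"
    using assms by simp
  then show "1 + c * (x - 1/x) = (c + 1 / (4 * c)) * x \<longleftrightarrow> x = 2 * c"
    using diff by linarith
qed

lemma F_lower_bound:
  fixes c t :: real
  assumes c: "c \<ge> 1" and t: "t \<ge> 0"
  shows "t / (t + 1) * ln c + t / 2 \<le> F c t"
    and "t / (t + 1) * ln c + t / 2 = F c t \<longleftrightarrow> t = 0"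
proof -
  define x s where "x = exp (t/2)" and "s = t / (t + 1)"
  have x: "x \<ge> 1" "x > 0" using t by (simp_all add: x_def)
  have s: "0 \<le> s" "s \<le> 1" using t by (simp_all add: s_def)
  have "(1 - s) * x\<^sup>2 = exp t / (t + 1)"
    using t by (simp add: x_def s_def field_simps power2_eq_square flip: exp_add)
  also have "\<dots> \<ge> 1"
    using t exp_ge_add_one_self[of t] by (simp add: add.commute)
  finally have sx: "(1 - s) * x\<^sup>2 \<ge> 1" .
  have pos: "0 < (1 + s * (c - 1)) * x"
    using c s x by (intro mult_pos_pos) (simp_all add: add_pos_nonneg)
  have "s * ln c + t / 2 \<le> ln (1 + s * (c - 1)) + ln x"
    using mult_ln_le_ln_affine[of c s] c s by (simp add: x_def)
  also have "\<dots> = ln ((1 + s * (c - 1)) * x)"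
    using pos x by (simp add: ln_mult zero_less_mult_iff)
  finally have lhs: "s * ln c + t / 2 \<le> ln ((1 + s * (c - 1)) * x)" .
  have F: "F c t = ln (1 + c * (x - 1/x))"
    by (simp add: F_exp_form x_def)
  have "ln ((1 + s * (c - 1)) * x) \<le> F c t"
    using affine_mult_le_sinh_form(1)[OF c x(1) sx] pos unfolding F by simp
  with lhs show "t / (t + 1) * ln c + t / 2 \<le> F c t"
    unfolding s_def by simp
  show "t / (t + 1) * ln c + t / 2 = F c t \<longleftrightarrow> t = 0"
  proof
    assume "t = 0"
    then show "t / (t + 1) * ln c + t / 2 = F c t" by (simp add: F_def)
  next
    assume eq: "t / (t + 1) * ln c + t / 2 = F c t"
    show "t = 0"
    proof (rule ccontr)
      assume "t \<noteq> 0"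
      then have "x > 1" using t by (simp add: x_def)
      then have "ln ((1 + s * (c - 1)) * x) < F c t"
        using affine_mult_le_sinh_form(2)[OF c x(1) sx] pos unfolding F by simp
      then show False using lhs eq s_def by simp
    qed
  qed
qed

lemma F_upper_bound:
  fixes c t :: real
  assumes c: "c > 0" and t: "t \<ge> 0"
  shows "F c t \<le> ln (c + 1 / (4 * c)) + t / 2"
    and "F c t = ln (c + 1 / (4 * c)) + t / 2 \<longleftrightarrow> c \<ge> 1 / 2 \<and> t = 2 * ln (2 * c)"
proof -
  define x where "x = exp (t/2)"
  have x: "x \<ge> 1" "x > 0" using t by (simp_all add: x_def)
  have F: "F c t = ln (1 + c * (x - 1/x))"
    by (simp add: F_exp_form x_def)
  have "c + 1 / (4 * c) > 0" using c by (simp add: add_pos_pos)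
  then have R: "ln (c + 1 / (4 * c)) + t / 2 = ln ((c + 1 / (4 * c)) * x)"
    using x by (simp add: ln_mult x_def)
  have "1 / x \<le> x" using x by (simp add: order_trans[OF _ x(1)])
  then have pos: "1 + c * (x - 1/x) > 0"
    using c by (simp add: add_pos_nonneg)
  have "x = 2 * c \<longleftrightarrow> c \<ge> 1 / 2 \<and> t = 2 * ln (2 * c)"
  proof
    assume "x = 2 * c"
    moreover have "ln x = t / 2" by (simp add: x_def)
    ultimately show "c \<ge> 1 / 2 \<and> t = 2 * ln (2 * c)" using x(1) by auto
  next
    assume "c \<ge> 1 / 2 \<and> t = 2 * ln (2 * c)"
    then show "x = 2 * c" using c by (simp add: x_def)
  qed
  then show "F c t \<le> ln (c + 1 / (4 * c)) + t / 2"
    and "F c t = ln (c + 1 / (4 * c)) + t / 2 \<longleftrightarrow> c \<ge> 1 / 2 \<and> t = 2 * ln (2 * c)"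
    unfolding F R using sinh_form_le_mult[OF c x(2)] pos x \<open>c + 1 / (4 * c) > 0\<close>
    by (simp_all add: ln_inj_iff)
qed

theorem lemma3p7:
  fixes c t :: real
  assumes "t \<ge> 0"
  shows "(c \<ge> 1 \<longrightarrow> t / (t + 1) * ln c + t / 2 \<le> F c t
            \<and> (t / (t + 1) * ln c + t / 2 = F c t \<longleftrightarrow> t = 0))
       \<and> (c > 0 \<longrightarrow> F c t \<le> ln (c + 1 / (4 * c)) + t / 2
            \<and> (F c t = ln (c + 1 / (4 * c)) + t / 2 \<longleftrightarrow> c \<ge> 1 / 2 \<and> t = 2 * ln (2 * c)))"
  using F_lower_bound[OF _ assms] F_upper_bound[OF _ assms] by blast

end
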